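(* Let $w\in\mathcal{W}^o_n$ and let $(O,E)\to(O',E')$ be one application of the step $(\psi)$ during the computation of $\Psi(w)$. Then $(O,E)$ is obtained from $(O',E')$ by applying one step $(\omega)$.
   Context: Fix a finite totally ordered alphabet $A$. Words are finite sequences over $A$; $-$ is the empty word. $<$ is lexicographic order (a proper prefix is smaller than the word); $\infty$ is a formal symbol with $w<\infty$ for all words $w$. A Lyndon word is a nonempty word strictly smaller than each of its proper nonempty suffixes. Every word has a unique Lyndon factorization $w=\ell_1\cdots\ell_m$ into Lyndon words with $\ell_1\ge\dots\ge\ell_m$, written $\ell_1|\cdots|\ell_m$. Odd/even refer to lengths. For a Lyndon word $\ell$ with $|\ell|\ge2$, its standard factorization is $\ell=rs$ with $s$ the longest proper suffix of $\ell$ that is Lyndon (equivalently the smallest proper nonempty suffix). $\mathcal{W}^o_n$: words of length $n$ whose Lyndon factors are all odd and pairwise distinct. Step $(\psi)$ on a pair of words $(O,E)$ with $|O|\ge2$ (as used in computing $\Psi(w)$, which starts from $(w,-)$ and iterates $(\psi)$ while $|O|\ge2$): let $O=o_1|\cdots|o_m$ (with $o_{m-1}=\infty$ if $m=1$); $o_m$ is splittable if $|o_m|\ge2$ and its standard factorization $o_m=rs$ satisfies $s<o_{m-1}$. Update to: (S) $(o_1\cdots o_{m-1}r,\ sE)$ if splittable and $r$ odd; (P) $(o_1\cdots o_{m-1}s,\ rE)$ if splittable and $r$ even; (F) $(o_1\cdots o_{m-2},\ o_mo_{m-1}E)$ if not splittable. Iterated standard factorization (ISF) of a Lyndon word $\ell$,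 $|\ell|\ge2$, with respect to $u$ (a word or $\infty$): the unique factorization $\ell=r_js_js_{j-1}\cdots s_1$, $j\ge1$, such that (a) for every $i\in[j]$, $s_i$ is the smallest proper nonempty suffix of $r_js_j\cdots s_i$; (b) for $i\in[j-1]$, $s_i$ is even and $s_i<u$; (c) $s_j$ is odd or $u\le s_j$. Step $(\omega)$ on a pair $(O',E')$ with $E'$ nonempty: let $O'=o'_1|\cdots|o'_h$ and $E'=e'_1|\cdots|e'_k$ be Lyndon factorizations (with $o'_h=\infty$ if $O'$ is empty). If $o'_h<e'_1$, update to (S') $(O'e'_1,\ e'_2\cdots e'_k)$. Otherwise let $e'_1=r_js_js_{j-1}\cdots s_1$ be the ISF of $e'_1$ with respect to $o'_h$ and update to (P') $(o'_1\cdots o'_{h-1}r_js_jo'_h,\ s_{j-1}\cdots s_1e'_2\cdots e'_k)$ if $o'_h\le s_j$, or to (F') $(O's_jr_j,\ s_{j-1}\cdots s_1e'_2\cdots e'_k)$ if $s_j<o'_h$. *)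

theory Defs
  imports Main
begin

text \<open>Words over a finite totally ordered alphabet are lists of type 'a list with
'a :: {linorder, finite}.  The formal symbol infinity is modelled by None in
'a list option (Some v is the word v).\<close>

definition lex_less :: "'a::linorder list \<Rightarrow> 'a list \<Rightarrow> bool" where
  "lex_less u v \<longleftrightarrow>
     (\<exists>z. z \<noteq> [] \<and> v = u @ z) \<or>
     (\<exists>p a b x y. u = p @ a # x \<and> v = p @ b # y \<and> a < b)"

definition lex_le :: "'a::linorder list \<Rightarrow> 'a list \<Rightarrow> bool" where
  "lex_le u v \<longleftrightarrow> lex_less u v \<or> u = v"

fun less_inf :: "'a::linorder list \<Rightarrow> 'a list option \<Rightarrow> bool" where
  "less_inf u None = True"
| "less_inf u (Some v) = lex_less u v"

fun inf_less :: "'a::linorder list option \<Rightarrow> 'a list \<Rightarrow> bool" where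
  "inf_less None v = False"
| "inf_less (Some u) v = lex_less u v"

fun inf_le :: "'a::linorder list option \<Rightarrow> 'a list \<Rightarrow> bool" where
  "inf_le None v = False"
| "inf_le (Some u) v = lex_le u v"

definition lyndon :: "'a::linorder list \<Rightarrow> bool" where
  "lyndon w \<longleftrightarrow> w \<noteq> [] \<and> (\<forall>k. 0 < k \<and> k < length w \<longrightarrow> lex_less w (drop k w))"

definition is_lyndon_fact :: "'a::linorder list \<Rightarrow> 'a list list \<Rightarrow> bool" where
  "is_lyndon_fact w fs \<longleftrightarrow> concat fs = w \<and> (\<forall>f\<in>set fs. lyndon f) \<and>
     (\<forall>i. Suc i < length fs \<longrightarrow> lex_le (fs ! Suc i) (fs ! i))"

definition lfact :: "'a::linorder list \<Rightarrow> 'a list list" where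
  "lfact w = (THE fs. is_lyndon_fact w fs)"

definition std_split :: "'a::linorder list \<Rightarrow> 'a list \<times> 'a list" where
  "std_split l = (let k = (LEAST k. 0 < k \<and> k < length l \<and> lyndon (drop k l))
                  in (take k l, drop k l))"

definition Wo :: "nat \<Rightarrow> 'a::linorder list set" where
  "Wo n = {w. length w = n \<and> (\<forall>f\<in>set (lfact w). odd (length f)) \<and> distinct (lfact w)}"

definition psi :: "'a::linorder list \<times> 'a list \<Rightarrow> 'a list \<times> 'a list" where
  "psi OE = (let Ow = fst OE; Ew = snd OE; fs = lfact Ow; m = length fs; om = last fs;
                 prev = (if m = 1 then None else Some (fs ! (m - 2)));
                 r = fst (std_split om); s = snd (std_split om);
                 splittable = (2 \<le> length om \<and> less_inf s prev)
             in if splittable \<and> odd (length r) then (concat (butlast fs) @ r, s @ Ew)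
                else if splittable then (concat (butlast fs) @ s, r @ Ew)
                else (concat (take (m - 2) fs), om @ fs ! (m - 2) @ Ew))"

inductive psi_run :: "'a::linorder list \<Rightarrow> 'a list \<times> 'a list \<Rightarrow> bool" for w where
  start: "psi_run w (w, [])"
| step: "psi_run w (Ow, Ew) \<Longrightarrow> 2 \<le> length Ow \<Longrightarrow> psi_run w (psi (Ow, Ew))"

definition min_suffix :: "'a::linorder list \<Rightarrow> 'a list \<Rightarrow> bool" where
  "min_suffix x s \<longleftrightarrow> (\<exists>k. 0 < k \<and> k < length x \<and> s = drop k x) \<and>
     (\<forall>k. 0 < k \<and> k < length x \<longrightarrow> lex_le s (drop k x))"

text \<open>Iterated standard factorization l = r_j s_j s_(j-1) ... s_1 w.r.t. u
  (u = None means infinity).  ss = [s_j, s_(j-1), ..., s_1], so ss ! t = s_(j-t)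
  and r_j s_j ... s_(j-t) = r @ concat (take (Suc t) ss).\<close>

definition isf :: "'a::linorder list option \<Rightarrow> 'a list \<Rightarrow> 'a list \<Rightarrow> 'a list list \<Rightarrow> bool" where
  "isf u l r ss \<longleftrightarrow> lyndon l \<and> 2 \<le> length l \<and> ss \<noteq> [] \<and> l = r @ concat ss \<and>
     (\<forall>t < length ss. min_suffix (r @ concat (take (Suc t) ss)) (ss ! t)) \<and>
     (\<forall>t. 0 < t \<and> t < length ss \<longrightarrow> even (length (ss ! t)) \<and> less_inf (ss ! t) u) \<and>
     (odd (length (ss ! 0)) \<or> inf_le u (ss ! 0))"

definition omega_step :: "'a::linorder list \<times> 'a list \<Rightarrow> 'a list \<times> 'a list \<Rightarrow> bool" where
  "omega_step P Q \<longleftrightarrow> snd P \<noteq> [] \<and>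
    (let Op = fst P; Ep = snd P; os = lfact Op; es = lfact Ep; h = length os;
         oh = (if h = 0 then None else Some (last os)); e1 = hd es
     in if inf_less oh e1 then Q = (Op @ e1, concat (tl es))
        else (\<exists>r ss. isf oh e1 r ss \<and>
               (if inf_le oh (hd ss)
                then Q = (concat (butlast os) @ r @ hd ss @ the oh, concat (tl ss) @ concat (tl es))
                else Q = (Op @ hd ss @ r, concat (tl ss) @ concat (tl es)))))"

end

theory Submission
  imports Defs "HOL-Library.List_Lexorder"
begin

text \<open>Along the computation of Psi(w) an invariant holds: the Lyndon factors of O are odd and
  pairwise distinct, and every Lyndon factor e of E is even, lies below every factor of O except
  the last one o_m, and lies below every proper suffix of o_m.  Under this invariant each step of
  (psi) is undone by the matching step of (omega).  In (S) the new last factor r of O is smaller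
  than s, so (S') moves s back.  In (P) and (F) the word put in front of E (r, resp. o_m o_(m-1))
  absorbs some leading factors of E into a single Lyndon factor.  Its iterated standard
  factorization with respect to the new last factor of O peels off exactly the absorbed factors,
  which are even and small by the invariant, and stops at s_j with r = r_j s_j, resp. at the odd
  word o_(m-1); since s is at most s_j while o_(m-1) is smaller than the new last factor, this is
  (P'), resp. (F').\<close>

lemma lex_less_iff_less [simp]: "lex_less u v \<longleftrightarrow> u < v"
  unfolding lex_less_def list_less_def lexord_def
  by (auto simp: neq_Nil_conv) blast+

lemma lex_le_iff_le [simp]: "lex_le u v \<longleftrightarrow> u \<le> v"
  unfolding lex_le_def list_le_def by simp

lemma append_less_append_iff [simp]: "p @ u < p @ v \<longleftrightarrow> u < v"
  for p u v :: "'a::linorder list"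
  by (induct p) auto

lemma less_append: "z \<noteq> [] \<Longrightarrow> u < u @ z"
  for u z :: "'a::linorder list"
  by (induct u) (auto simp: neq_Nil_conv)

lemma le_append: "u \<le> u @ z"
  for u z :: "'a::linorder list"
  using less_append[of z u] by (cases "z = []") auto

lemma le_imp_le_append: "v \<le> y \<Longrightarrow> v \<le> y @ z"
  for v y z :: "'a::linorder list"
proof (induct v arbitrary: y)
  case (Cons a v)
  then show ?case by (cases y) auto
qed simp

lemma less_not_prefix_append:
  fixes u v x y :: "'a::linorder list"
  assumes "u < v" and "\<nexists>z. v = u @ z"
  shows "u @ x < v @ y"
  using assms
proof (induct u arbitrary: v)
  case (Cons a u)
  then show ?case by (cases v) auto
qed simp

lemma less_not_prefix_append_left:
  fixes u v x :: "'a::linorder list"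
  assumes "u < v" and "\<nexists>z. v = u @ z"
  shows "u @ x < v"
  using less_not_prefix_append[OF assms, of x "[]"] by simp

section \<open>Lyndon words\<close>

lemma lyndon_less_drop: "lyndon l \<Longrightarrow> 0 < k \<Longrightarrow> k < length l \<Longrightarrow> l < drop k l"
  unfolding lyndon_def by simp

lemma lyndon_not_Nil: "lyndon l \<Longrightarrow> l \<noteq> []"
  unfolding lyndon_def by simp

lemma lyndon_le_drop: "lyndon l \<Longrightarrow> k < length l \<Longrightarrow> l \<le> drop k l"
  by (cases "k = 0") (auto dest: lyndon_less_drop)

lemma lyndon_singleton: "lyndon [a]"
  unfolding lyndon_def by auto

lemma lyndon_prefix_append_less:
  fixes p s e :: "'a::linorder list"
  assumes s: "lyndon s" and "p \<noteq> []" and "p < s" and "e \<le> s"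
  shows "p @ e < s"
proof (cases "\<exists>z. s = p @ z")
  case True
  then obtain z where z: "s = p @ z" by blast
  with assms have "s < drop (length p) s"
    by (intro lyndon_less_drop) auto
  with z \<open>e \<le> s\<close> show ?thesis by simp
next
  case False
  with \<open>p < s\<close> show ?thesis by (rule less_not_prefix_append_left)
qed

lemma lyndon_prefix_append_concat_less:
  fixes p s :: "'a::linorder list"
  assumes "lyndon s" and "p \<noteq> []" and "p < s" and "\<forall>e\<in>set es. e \<le> s"
  shows "p @ concat es < s"
  using assms(2-4)
proof (induct es arbitrary: p)
  case (Cons e es)
  have "p @ e < s" using lyndon_prefix_append_less[OF assms(1)] Cons.prems by simp
  with Cons.hyps[of "p @ e"] Cons.prems show ?case by simp
qed simp

lemma lyndon_append:
  fixes u v :: "'a::linorder list"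
  assumes u: "lyndon u" and v: "lyndon v" and "u < v"
  shows "lyndon (u @ v)"
  unfolding lyndon_def lex_less_iff_less
proof (intro conjI allI impI)
  show "u @ v \<noteq> []" using lyndon_not_Nil[OF u] by simp
  have uv_less_v: "u @ v < v"
    using lyndon_prefix_append_less[OF v lyndon_not_Nil[OF u] \<open>u < v\<close>] by simp
  fix k assume k: "0 < k \<and> k < length (u @ v)"
  consider "k < length u" | "k = length u" | "k > length u" by linarith
  then show "u @ v < drop k (u @ v)"
  proof cases
    case 1
    have "\<nexists>z. drop k u = u @ z"
      using k 1 by (auto dest: arg_cong[of _ _ length])
    with lyndon_less_drop[OF u] k 1 have "u @ v < drop k u @ v"
      by (intro less_not_prefix_append) auto
    with 1 show ?thesis by simp
  next
    case 2
    with uv_less_v show ?thesis by simp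
  next
    case 3
    with v k have "v < drop (k - length u) v" by (intro lyndon_less_drop) auto
    with 3 uv_less_v show ?thesis by simp
  qed
qed

section \<open>Lyndon factorization\<close>

definition lyndon_factors :: "'a::linorder list list \<Rightarrow> bool" where
  "lyndon_factors fs \<longleftrightarrow> (\<forall>f\<in>set fs. lyndon f) \<and> sorted_wrt (\<ge>) fs"

lemma is_lyndon_fact_iff: "is_lyndon_fact w fs \<longleftrightarrow> concat fs = w \<and> lyndon_factors fs"
proof -
  have "transp ((\<ge>) :: 'a list \<Rightarrow> _)" by (auto simp: transp_def)
  then show ?thesis
    unfolding is_lyndon_fact_def lyndon_factors_def
    by (auto simp: sorted_wrt_iff_nth_Suc_transp)
qed

lemma sorted_wrt_ge_distinct:
  "sorted_wrt (\<ge>) xs \<Longrightarrow> distinct xs \<Longrightarrow> sorted_wrt (>) xs" for xs :: "'b::order list"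
  by (induct xs) (auto simp: order.order_iff_strict)

lemma lyndon_factors_Cons:
  "lyndon_factors (f # fs) \<longleftrightarrow> lyndon f \<and> (\<forall>g\<in>set fs. g \<le> f) \<and> lyndon_factors fs"
  by (auto simp: lyndon_factors_def)

lemma lyndon_factors_append:
  "lyndon_factors (fs @ gs) \<longleftrightarrow>
     lyndon_factors fs \<and> lyndon_factors gs \<and> (\<forall>f\<in>set fs. \<forall>g\<in>set gs. g \<le> f)"
  by (auto simp: lyndon_factors_def sorted_wrt_append)

lemma prefix_concat_has_suffix_le:
  fixes c q t :: "'a::linorder list"
  assumes "\<forall>g\<in>set gs. g \<le> c" and "q \<noteq> []" and "q @ t = concat gs"
  shows "\<exists>y x. x \<noteq> [] \<and> q = y @ x \<and> x \<le> c"
  using assms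
proof (induct gs arbitrary: q t)
  case (Cons g gs)
  then obtain us where
    "q = g @ us \<and> us @ t = concat gs \<or> q @ us = g \<and> t = us @ concat gs"
    by (auto simp: append_eq_append_conv2)
  then show ?case
  proof (elim disjE conjE)
    assume q: "q = g @ us" and us: "us @ t = concat gs"
    show ?thesis
    proof (cases "us = []")
      case True
      with q Cons.prems show ?thesis by auto
    next
      case False
      with Cons.hyps[OF _ False us] Cons.prems q show ?thesis
        by (metis append.assoc list.set_intros(2))
    qed
  next
    assume "q @ us = g"
    then have "q \<le> c" using Cons.prems(1) le_append[of q us] by auto
    with \<open>q \<noteq> []\<close> show ?thesis by blast
  qed
qed simp

text \<open>A Lyndon prefix longer than the first factor would end in a suffix bounded by that
  factor, contradicting the Lyndon property.\<close>

lemma length_lyndon_prefix_le_hd: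
  assumes fs: "lyndon_factors (f # fs)" and p: "lyndon p" and eq: "p @ t = f @ concat fs"
  shows "length p \<le> length f"
proof (rule ccontr)
  assume "\<not> length p \<le> length f"
  with eq obtain us where us: "p = f @ us" "us @ t = concat fs" "us \<noteq> []"
    by (auto simp: append_eq_append_conv2)
  from fs have "\<forall>g\<in>set fs. g \<le> f" by (simp add: lyndon_factors_Cons)
  from prefix_concat_has_suffix_le[OF this us(3,2)]
  obtain y x where x: "x \<noteq> []" "us = y @ x" "x \<le> f" by blast
  have "f \<noteq> []" using fs lyndon_not_Nil by (auto simp: lyndon_factors_Cons)
  with p us x have "p < drop (length f + length y) p"
    by (intro lyndon_less_drop) auto
  with us x have "p < x" by simp
  moreover have "f < p" using us less_append by blast
  ultimately show False using \<open>x \<le> f\<close> by simp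
qed

lemma lyndon_factors_unique:
  "lyndon_factors fs \<Longrightarrow> lyndon_factors gs \<Longrightarrow> concat fs = concat gs \<Longrightarrow> fs = gs"
proof (induct fs arbitrary: gs)
  case Nil
  then show ?case
    by (cases gs) (auto simp: lyndon_factors_Cons dest: lyndon_not_Nil)
next
  case (Cons f fs)
  then obtain g gs' where g: "gs = g # gs'"
    by (cases gs) (auto simp: lyndon_factors_Cons dest: lyndon_not_Nil)
  with Cons.prems have "length f = length g"
    using length_lyndon_prefix_le_hd[of f fs g "concat gs'"]
      length_lyndon_prefix_le_hd[of g gs' f "concat fs"]
    by (auto simp: lyndon_factors_Cons)
  with Cons.prems g have "f = g" "concat fs = concat gs'"
    by (auto simp: append_eq_append_conv)
  with Cons g show ?case by (simp add: lyndon_factors_Cons)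
qed

fun lyndon_push :: "'a::linorder list \<Rightarrow> 'a list list \<Rightarrow> 'a list list" where
  "lyndon_push u [] = [u]"
| "lyndon_push u (e # es) = (if u < e then lyndon_push (u @ e) es else u # e # es)"

lemma lyndon_factors_push:
  "lyndon u \<Longrightarrow> lyndon_factors es \<Longrightarrow> lyndon_factors (lyndon_push u es)"
proof (induct u es rule: lyndon_push.induct)
  case (2 u e es)
  then show ?case
    by (auto simp: lyndon_factors_Cons lyndon_append intro: order.trans)
qed (simp add: lyndon_factors_def)

lemma lyndon_push_eq: "\<exists>i \<le> length es. lyndon_push u es = (u @ concat (take i es)) # drop i es"
proof (induct u es rule: lyndon_push.induct)
  case (2 u e es)
  show ?case
  proof (cases "u < e")
    case True
    with 2 obtain i where "i \<le> length es"
      "lyndon_push (u @ e) es = (u @ e @ concat (take i es)) # drop i es"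
      by auto
    with True show ?thesis by (intro exI[of _ "Suc i"]) auto
  qed (intro exI[of _ 0], auto)
qed simp

lemma concat_lyndon_push: "concat (lyndon_push u es) = u @ concat es"
  by (induct u es rule: lyndon_push.induct) auto

lemma lyndon_factorization_exists: "\<exists>fs. concat fs = w \<and> lyndon_factors fs"
proof (induct w)
  case Nil
  show ?case by (intro exI[of _ "[]"]) (simp add: lyndon_factors_def)
next
  case (Cons a w)
  then obtain fs where "concat fs = w" "lyndon_factors fs" by blast
  then show ?case
    using lyndon_factors_push[OF lyndon_singleton] concat_lyndon_push[of "[a]" fs] by auto
qed

lemma lfact_concat [simp]: "lyndon_factors fs \<Longrightarrow> lfact (concat fs) = fs"
  unfolding lfact_def is_lyndon_fact_iff
  by (rule the_equality) (auto intro: lyndon_factors_unique)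

lemma lyndon_factors_lfact: "lyndon_factors (lfact w)"
  and concat_lfact [simp]: "concat (lfact w) = w"
  using lyndon_factorization_exists[of w] lfact_concat by auto

lemma lfact_Nil [simp]: "lfact [] = []"
  using lfact_concat[of "[]"] by (simp add: lyndon_factors_def)

lemma lfact_lyndon_append:
  assumes "lyndon u" and "lyndon_factors es"
  obtains i where "lfact (u @ concat es) = (u @ concat (take i es)) # drop i es"
proof -
  obtain i where "lyndon_push u es = (u @ concat (take i es)) # drop i es"
    using lyndon_push_eq by blast
  moreover have "lfact (u @ concat es) = lyndon_push u es"
    using lfact_concat[OF lyndon_factors_push[OF assms]] by (simp add: concat_lyndon_push)
  ultimately show thesis using that by simp
qed

section \<open>Lower bounds for suffixes and the standard factorization\<close>

definition suffixes_ge :: "'a::linorder list \<Rightarrow> 'a list \<Rightarrow> bool" where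
  "suffixes_ge e x \<longleftrightarrow> (\<forall>k < length x. e \<le> drop k x)"

definition proper_suffixes_ge :: "'a::linorder list \<Rightarrow> 'a list \<Rightarrow> bool" where
  "proper_suffixes_ge e x \<longleftrightarrow> (\<forall>k. 0 < k \<and> k < length x \<longrightarrow> e \<le> drop k x)"

lemma proper_suffixes_ge_le_suffix:
  assumes "proper_suffixes_ge e (x @ y)" and "x \<noteq> []" and "y \<noteq> []"
  shows "e \<le> y"
proof -
  from assms(1) have "0 < length x \<and> length x < length (x @ y) \<longrightarrow> e \<le> drop (length x) (x @ y)"
    unfolding proper_suffixes_ge_def by blast
  with assms(2,3) show ?thesis by simp
qed

lemma suffixes_ge_lyndon: "lyndon f \<Longrightarrow> e \<le> f \<Longrightarrow> suffixes_ge e f"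
  unfolding suffixes_ge_def using lyndon_le_drop order.trans by blast

lemma proper_suffixes_ge_lyndon: "lyndon f \<Longrightarrow> e \<le> f \<Longrightarrow> proper_suffixes_ge e f"
  unfolding proper_suffixes_ge_def using lyndon_le_drop order.trans by blast

lemma proper_suffixes_ge_mono: "e \<le> e' \<Longrightarrow> proper_suffixes_ge e' x \<Longrightarrow> proper_suffixes_ge e x"
  unfolding proper_suffixes_ge_def using order.trans by blast

lemma suffixes_ge_append:
  assumes x: "suffixes_ge e x" and y: "suffixes_ge e y"
  shows "suffixes_ge e (x @ y)"
  unfolding suffixes_ge_def
proof (intro allI impI)
  fix k assume k: "k < length (x @ y)"
  show "e \<le> drop k (x @ y)"
  proof (cases "k < length x")
    case True
    with x show ?thesis by (simp add: suffixes_ge_def le_imp_le_append)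
  next
    case False
    with y k show ?thesis by (simp add: suffixes_ge_def)
  qed
qed

lemma proper_suffixes_ge_append:
  assumes x: "proper_suffixes_ge e x" and y: "suffixes_ge e y"
  shows "proper_suffixes_ge e (x @ y)"
  unfolding proper_suffixes_ge_def
proof (intro allI impI)
  fix k assume k: "0 < k \<and> k < length (x @ y)"
  show "e \<le> drop k (x @ y)"
  proof (cases "k < length x")
    case True
    with x k show ?thesis by (simp add: proper_suffixes_ge_def le_imp_le_append)
  next
    case False
    with k have "k - length x < length y" by simp linarith
    with y False show ?thesis by (simp add: suffixes_ge_def)
  qed
qed

lemma suffixes_ge_concat: "\<forall>f\<in>set fs. lyndon f \<and> e \<le> f \<Longrightarrow> suffixes_ge e (concat fs)"
proof (induct fs)
  case Nil
  show ?case by (simp add: suffixes_ge_def)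
next
  case (Cons f fs)
  then show ?case by (simp add: suffixes_ge_append suffixes_ge_lyndon)
qed

lemma min_suffix_append:
  assumes "proper_suffixes_ge e x" and "x \<noteq> []" and "suffixes_ge e y" and "lyndon e"
  shows "min_suffix (x @ y @ e) e"
proof -
  have "proper_suffixes_ge e (x @ y @ e)"
    using assms by (simp add: proper_suffixes_ge_append suffixes_ge_append suffixes_ge_lyndon)
  moreover have "e = drop (length x + length y) (x @ y @ e)"
    and "0 < length x + length y" and "length x + length y < length (x @ y @ e)"
    using assms lyndon_not_Nil by auto
  ultimately show ?thesis
    unfolding min_suffix_def proper_suffixes_ge_def lex_le_iff_le by blast
qed

lemma lyndon_min_proper_suffix:
  assumes "2 \<le> length l"
  obtains k where "0 < k" "k < length l" "lyndon (drop k l)" "proper_suffixes_ge (drop k l) l"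
proof -
  let ?S = "(\<lambda>k. drop k l) ` {0<..<length l}"
  have fin: "finite ?S" by simp
  have "1 \<in> {0<..<length l}" using assms by simp
  then have "?S \<noteq> {}" by blast
  then obtain k where k: "k \<in> {0<..<length l}" "Min ?S = drop k l"
    using Min_in[OF fin] by blast
  define m where "m = drop k l"
  have min: "m \<le> drop i l" if "i \<in> {0<..<length l}" for i
    using Min_le[OF fin] that k m_def by auto
  have "lyndon m"
    unfolding lyndon_def lex_less_iff_less
  proof (intro conjI allI impI)
    show "m \<noteq> []" using k m_def by simp
    fix j assume j: "0 < j \<and> j < length m"
    then have "m \<le> drop j m" using min[of "k + j"] k m_def by (auto simp: add.commute)
    moreover from j have "length (drop j m) \<noteq> length m" by auto
    then have "m \<noteq> drop j m" by metis
    ultimately show "m < drop j m" by simp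
  qed
  moreover have "proper_suffixes_ge m l" using min unfolding proper_suffixes_ge_def by simp
  ultimately show thesis using that k m_def by auto
qed

text \<open>The longest Lyndon proper suffix is the smallest proper suffix, since the smallest one
  is Lyndon and every proper suffix of a Lyndon word is larger than it.\<close>

lemma std_split_min_suffix:
  assumes len: "2 \<le> length l" and split: "std_split l = (r, s)"
  shows "l = r @ s" "r \<noteq> []" "lyndon s" "proper_suffixes_ge s l"
proof -
  obtain k1 where k1: "0 < k1" "k1 < length l" "lyndon (drop k1 l)"
    and min: "proper_suffixes_ge (drop k1 l) l"
    using lyndon_min_proper_suffix[OF len] .
  define P where "P k \<longleftrightarrow> 0 < k \<and> k < length l \<and> lyndon (drop k l)" for k
  define k0 where "k0 = (LEAST k. P k)"
  have "P k1" unfolding P_def using k1 by simp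
  then have Pk0: "P k0" and "k0 \<le> k1" unfolding k0_def by (auto intro: LeastI Least_le)
  have rs: "r = take k0 l" "s = drop k0 l"
    using split unfolding std_split_def k0_def P_def Let_def by auto
  then show "l = r @ s" "r \<noteq> []" "lyndon s" using Pk0 unfolding P_def by auto
  have "k0 = k1"
  proof (rule ccontr)
    assume "k0 \<noteq> k1"
    with \<open>k0 \<le> k1\<close> Pk0 k1 rs have "s < drop (k1 - k0) s"
      unfolding P_def by (intro lyndon_less_drop) auto
    also have "drop (k1 - k0) s = drop k1 l"
      using rs \<open>k0 \<le> k1\<close> by (simp add: add.commute)
    also have "drop k1 l \<le> s"
      using min Pk0 rs unfolding proper_suffixes_ge_def P_def by simp
    finally show False by simp
  qed
  with min rs show "proper_suffixes_ge s l" by simp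
qed

lemma proper_suffixes_ge_left_factor:
  assumes s: "lyndon s" and ge: "proper_suffixes_ge s (r @ s)"
  shows "proper_suffixes_ge s r"
  unfolding proper_suffixes_ge_def
proof (intro allI impI)
  fix k assume k: "0 < k \<and> k < length r"
  have "s \<le> drop k (r @ s)"
    using ge k unfolding proper_suffixes_ge_def by (simp del: drop_append)
  then have "s \<le> drop k r @ s" using k by simp
  moreover have "drop k r @ s < s" if "drop k r < s"
    using lyndon_prefix_append_less[OF s _ that order.refl] k by simp
  ultimately show "s \<le> drop k r" by (meson leD leI)
qed

lemma lyndon_left_factor:
  assumes l: "lyndon (r @ s)" and "r \<noteq> []" "s \<noteq> []" and ge: "proper_suffixes_ge s (r @ s)"
  shows "lyndon r"
  unfolding lyndon_def lex_less_iff_less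
proof (intro conjI allI impI)
  show "r \<noteq> []" by fact
  fix k assume k: "0 < k \<and> k < length r"
  obtain x where x: "x = drop k r" "x \<noteq> []" "length x < length r" using k by auto
  have less: "r @ s < x @ s" using lyndon_less_drop[OF l, of k] k x by simp
  show "r < drop k r"
  proof (rule ccontr)
    assume "\<not> r < drop k r"
    moreover have "x \<noteq> r" using x(3) by auto
    ultimately have "x < r" using x by simp
    show False
    proof (cases "\<exists>y. r = x @ y")
      case True
      then obtain y where y: "r = x @ y" by blast
      with less have "y @ s < s" by simp
      moreover have "0 < length x" "length x < length (r @ s)" using x by auto
      with ge have "s \<le> drop (length x) (r @ s)" unfolding proper_suffixes_ge_def by blast
      ultimately show False using y by simp
    next
      case False
      with \<open>x < r\<close> have "x @ s < r @ s" by (rule less_not_prefix_append)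
      with less show False by simp
    qed
  qed
qed

lemma lyndon_prefix_less_suffix:
  assumes l: "lyndon (r @ s)" and "r \<noteq> []" "s \<noteq> []"
  shows "r < s"
proof -
  have "r < r @ s" using \<open>s \<noteq> []\<close> by (rule less_append)
  also have "\<dots> < drop (length r) (r @ s)" using assms by (intro lyndon_less_drop) auto
  finally show ?thesis by simp
qed

lemma std_split_lyndon:
  assumes "lyndon l" and "2 \<le> length l" and "std_split l = (r, s)"
  shows "l = r @ s" "lyndon r" "lyndon s" "r < s" "proper_suffixes_ge s l" "proper_suffixes_ge s r"
proof -
  note split = std_split_min_suffix[OF assms(2,3)]
  then show l: "l = r @ s" and s: "lyndon s" and ge: "proper_suffixes_ge s l" by auto
  have "s \<noteq> []" using s lyndon_not_Nil by blast
  with split assms(1) show "lyndon r" "r < s"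
    using lyndon_left_factor[of r s] lyndon_prefix_less_suffix[of r s] by auto
  from s ge l show "proper_suffixes_ge s r"
    using proper_suffixes_ge_left_factor[of s r] by simp
qed

lemma isf_append_factors:
  assumes l: "lyndon (r @ x @ concat ys)" and x: "min_suffix (r @ x) x"
    and ys: "lyndon_factors ys"
    and ys_bound: "\<forall>e\<in>set ys. proper_suffixes_ge e (r @ x) \<and> even (length e) \<and> less_inf e u"
    and x_bound: "odd (length x) \<or> inf_le u x"
  shows "isf u (r @ x @ concat ys) r (x # ys)"
  unfolding isf_def
proof (intro conjI allI impI)
  have "r @ x \<noteq> []" and "2 \<le> length (r @ x)"
    using x unfolding min_suffix_def by auto
  then show "2 \<le> length (r @ x @ concat ys)" by simp
  fix t assume t: "t < length (x # ys)"
  show "min_suffix (r @ concat (take (Suc t) (x # ys))) ((x # ys) ! t)"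
  proof (cases t)
    case 0
    with x show ?thesis by simp
  next
    case (Suc i)
    with t have i: "i < length ys" by simp
    have "suffixes_ge (ys ! i) (concat (take i ys))"
    proof (rule suffixes_ge_concat, intro ballI conjI)
      fix f assume "f \<in> set (take i ys)"
      then obtain j where "j < i" "f = ys ! j" using i by (auto simp: in_set_conv_nth)
      with ys i show "lyndon f" "ys ! i \<le> f"
        using sorted_wrt_nth_less[of "(\<ge>)" ys j i] by (auto simp: lyndon_factors_def)
    qed
    with ys_bound ys i \<open>r @ x \<noteq> []\<close>
    have "min_suffix ((r @ x) @ concat (take i ys) @ ys ! i) (ys ! i)"
      by (intro min_suffix_append) (auto simp: lyndon_factors_def)
    with Suc i show ?thesis by (simp add: take_Suc_conv_app_nth)
  qed
qed (use assms in \<open>auto simp: nth_Cons'\<close>)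

definition last_factor :: "'a list list \<Rightarrow> 'a list option" where
  "last_factor fs = (if fs = [] then None else Some (last fs))"

lemma last_factor_gt:
  assumes "\<forall>f\<in>set fs. e < f"
  shows "less_inf e (last_factor fs)" and "\<not> inf_less (last_factor fs) e"
    and "\<not> inf_le (last_factor fs) e"
  using assms last_in_set[of fs] by (auto simp: last_factor_def not_less not_le intro: less_imp_le)

lemma omega_step_S:
  assumes "lfact Ew = e # es" and "inf_less (last_factor (lfact Ow)) e"
  shows "omega_step (Ow, Ew) (Ow @ e, concat es)"
  using assms unfolding omega_step_def last_factor_def Let_def by auto

lemma omega_step_P:
  assumes "lfact Ow = os @ [oh]" and "lfact Ew = e # es" and "e < oh"
    and "isf (Some oh) e r (x # ys)" and "oh \<le> x"
  shows "omega_step (Ow, Ew) (concat os @ r @ x @ oh, concat ys @ concat es)"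
  using assms unfolding omega_step_def Let_def
  by (auto intro!: exI[of _ r] exI[of _ "x # ys"])

lemma omega_step_F:
  assumes "lfact Ew = e # es" and "\<not> inf_less (last_factor (lfact Ow)) e"
    and "isf (last_factor (lfact Ow)) e r (x # ys)" and "\<not> inf_le (last_factor (lfact Ow)) x"
  shows "omega_step (Ow, Ew) (Ow @ x @ r, concat ys @ concat es)"
  using assms unfolding omega_step_def last_factor_def Let_def
  by (auto intro!: exI[of _ r] exI[of _ "x # ys"])

section \<open>The step (psi) is inverted by (omega)\<close>

lemma psi_eq:
  assumes "lfact Ow = pre @ [om]" and "std_split om = (r, s)" and "pre = [] \<longrightarrow> 2 \<le> length om"
  shows "psi (Ow, Ew) =
    (if 2 \<le> length om \<and> less_inf s (last_factor pre)
     then if odd (length r) then (concat pre @ r, s @ Ew) else (concat pre @ s, r @ Ew)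
     else (concat (butlast pre), om @ last pre @ Ew))"
proof (cases pre rule: rev_cases)
  case (snoc pre' op)
  then have "(pre @ [om]) ! (length (pre @ [om]) - 2) = op"
    and "take (length (pre @ [om]) - 2) (pre @ [om]) = pre'"
    by (simp_all add: nth_append)
  with assms snoc show ?thesis by (simp add: psi_def last_factor_def Let_def butlast_append)
qed (use assms in \<open>simp add: psi_def last_factor_def Let_def\<close>)

lemma even_length_concat: "\<forall>x\<in>set xs. even (length x) \<Longrightarrow> even (length (concat xs))"
  by (induct xs) auto

definition factor_bound :: "'a::linorder list list \<Rightarrow> 'a list \<Rightarrow> bool" where
  "factor_bound os e \<longleftrightarrow>
     (\<forall>f\<in>set (butlast os). e \<le> f) \<and> (os \<noteq> [] \<longrightarrow> proper_suffixes_ge e (last os))"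

lemma factor_bound_snoc [simp]:
  "factor_bound (os @ [o']) e \<longleftrightarrow> (\<forall>f\<in>set os. e \<le> f) \<and> proper_suffixes_ge e o'"
  by (simp add: factor_bound_def)

lemma factor_bound_lyndon: "\<forall>f\<in>set os. lyndon f \<and> e \<le> f \<Longrightarrow> factor_bound os e"
  by (cases os rule: rev_cases) (auto simp: factor_bound_def proper_suffixes_ge_lyndon)

definition factor_invariant :: "'a::linorder list list \<Rightarrow> 'a list list \<Rightarrow> bool" where
  "factor_invariant os es \<longleftrightarrow> (\<forall>f\<in>set os. odd (length f)) \<and> distinct os \<and>
     (\<forall>e\<in>set es. even (length e) \<and> factor_bound os e)"

locale psi_state =
  fixes pre :: "'a::linorder list list" and om :: "'a list" and es :: "'a list list"
  assumes factors_O: "lyndon_factors (pre @ [om])"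
    and factors_E: "lyndon_factors es"
    and invariant: "factor_invariant (pre @ [om]) es"
begin

lemma om_lyndon: "lyndon om"
  using factors_O by (simp add: lyndon_factors_def)

lemma O_strictly_decreasing: "sorted_wrt (>) (pre @ [om])"
proof (rule sorted_wrt_ge_distinct)
  show "sorted_wrt (\<ge>) (pre @ [om])" using factors_O by (simp only: lyndon_factors_def)
  show "distinct (pre @ [om])" using invariant by (simp only: factor_invariant_def)
qed

lemma odd_O: "f \<in> set (pre @ [om]) \<Longrightarrow> odd (length f)"
  using invariant by (auto simp: factor_invariant_def)

lemma es_bound: "e \<in> set es \<Longrightarrow> even (length e) \<and> (\<forall>f\<in>set pre. e \<le> f) \<and> proper_suffixes_ge e om"
  using invariant by (simp add: factor_invariant_def)

lemma even_concat_take_es: "even (length (concat (take i es)))"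
  using even_length_concat[of "take i es"] es_bound by (auto dest: in_set_takeD)

lemma s_less_pre_iff: "less_inf s (last_factor pre) \<longleftrightarrow> (\<forall>f\<in>set pre. s < f)"
proof (cases pre rule: rev_cases)
  case (snoc pre' op)
  with O_strictly_decreasing show ?thesis
    by (auto simp: last_factor_def sorted_wrt_append intro: order.strict_trans)
qed (simp add: last_factor_def)

end

locale psi_splittable = psi_state +
  fixes r s :: "'a::linorder list"
  assumes om_length: "2 \<le> length om" and om_split: "std_split om = (r, s)"
    and s_less_pre: "\<forall>f\<in>set pre. s < f"
begin

lemma om_eq: "om = r @ s"
  and r_lyndon: "lyndon r" and s_lyndon: "lyndon s" and r_less_s: "r < s"
  and s_le_suffixes_r: "proper_suffixes_ge s r"
  using std_split_lyndon[OF om_lyndon om_length om_split] by auto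

lemma r_not_Nil: "r \<noteq> []"
  using r_lyndon lyndon_not_Nil by blast

lemma es_le_s: "e \<in> set es \<Longrightarrow> e \<le> s"
  using es_bound[of e] proper_suffixes_ge_le_suffix[of e r s] om_eq r_not_Nil
    lyndon_not_Nil[OF s_lyndon] by simp

lemma lfact_pre_r: "lfact (concat pre @ r) = pre @ [r]"
  using lfact_concat[of "pre @ [r]"] factors_O r_lyndon r_less_s s_less_pre
  by (auto simp: lyndon_factors_append lyndon_factors_Cons intro: less_imp_le order.strict_trans)

lemma lfact_s_es: "lfact (s @ concat es) = s # es"
  using lfact_concat[of "s # es"] factors_E s_lyndon es_le_s by (simp add: lyndon_factors_Cons)

lemma psi_S_invariant:
  assumes "odd (length r)"
  shows "factor_invariant (lfact (concat pre @ r)) (lfact (s @ concat es))"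
proof -
  have "even (length s)" using odd_O[of om] om_eq assms by simp
  moreover have "factor_bound (pre @ [r]) e" if "e \<in> set (s # es)" for e
  proof -
    have "e \<le> s" using that es_le_s by auto
    with s_less_pre proper_suffixes_ge_mono[OF _ s_le_suffixes_r] show ?thesis
      by (auto intro: less_imp_le le_less_trans)
  qed
  moreover have "r \<notin> set pre" using r_less_s s_less_pre by fastforce
  ultimately show ?thesis
    using odd_O es_bound assms invariant
    unfolding lfact_pre_r lfact_s_es factor_invariant_def by auto
qed

lemma psi_S_omega: "omega_step (concat pre @ r, s @ concat es) (concat pre @ om, concat es)"
  using omega_step_S[OF lfact_s_es, of "concat pre @ r"] lfact_pre_r r_less_s om_eq
  by (simp add: last_factor_def)

lemma lfact_pre_s: "lfact (concat pre @ s) = pre @ [s]"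
  using lfact_concat[of "pre @ [s]"] factors_O s_lyndon s_less_pre
  by (simp add: lyndon_factors_append lyndon_factors_Cons less_imp_le)

lemma r_append_take_es_less_s: "r @ concat (take i es) < s"
  using lyndon_prefix_append_concat_less[OF s_lyndon r_not_Nil r_less_s] es_le_s
  by (meson in_set_takeD)

context
  assumes r_even: "even (length r)"
begin

lemma s_odd: "odd (length s)"
  using odd_O[of om] om_eq r_even by simp

text \<open>Equality is excluded by parity.\<close>

lemma es_less_s: "e \<in> set es \<Longrightarrow> e < s"
  using es_le_s es_bound s_odd by (metis order.not_eq_order_implies_strict)

lemma psi_P_invariant: "factor_invariant (lfact (concat pre @ s)) (lfact (r @ concat es))"
proof -
  obtain i where lfact_E': "lfact (r @ concat es) = (r @ concat (take i es)) # drop i es"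
    using lfact_lyndon_append[OF r_lyndon factors_E] by blast
  have "factor_bound (pre @ [s]) e" if "e \<in> set (lfact (r @ concat es))" for e
  proof -
    have "e < s"
      using that r_append_take_es_less_s es_less_s unfolding lfact_E' by (auto dest: in_set_dropD)
    with s_less_pre s_lyndon show ?thesis
      by (auto intro: less_imp_le order.strict_trans proper_suffixes_ge_lyndon)
  qed
  moreover have "even (length (r @ concat (take i es)))"
    using r_even even_concat_take_es by simp
  ultimately show ?thesis
    using odd_O invariant s_odd s_less_pre es_bound
    unfolding lfact_pre_s factor_invariant_def by (auto simp: lfact_E' dest: in_set_dropD)
qed

lemma psi_P_omega: "omega_step (concat pre @ s, r @ concat es) (concat pre @ om, concat es)"
proof -
  obtain i where lfact_E': "lfact (r @ concat es) = (r @ concat (take i es)) # drop i es"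
    using lfact_lyndon_append[OF r_lyndon factors_E] by blast
  obtain rj sj where r_split: "std_split r = (rj, sj)" by fastforce
  have "length r \<noteq> 0" "length r \<noteq> 1" using r_not_Nil r_even by auto
  then have "2 \<le> length r" by linarith
  note r_std = std_split_min_suffix[OF this r_split]
  have sj_not_Nil: "sj \<noteq> []" using lyndon_not_Nil[OF r_std(3)] .
  have "min_suffix (rj @ sj) sj"
    using r_std sj_not_Nil unfolding min_suffix_def proper_suffixes_ge_def by force
  moreover have "s \<le> sj"
    using proper_suffixes_ge_le_suffix[of s rj sj] s_le_suffixes_r r_std sj_not_Nil by simp
  moreover have "proper_suffixes_ge e r" "less_inf e (Some s)" if "e \<in> set (take i es)" for e
    using that es_less_s proper_suffixes_ge_mono[OF _ s_le_suffixes_r]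
    by (auto dest: in_set_takeD intro: less_imp_le)
  moreover have "lyndon (r @ concat (take i es))"
    using lyndon_factors_lfact[of "r @ concat es"] unfolding lfact_E'
    by (simp add: lyndon_factors_Cons)
  ultimately have "isf (Some s) (rj @ sj @ concat (take i es)) rj (sj # take i es)"
    using factors_E es_bound r_std(1)
    by (intro isf_append_factors)
      (auto simp: lyndon_factors_def dest: in_set_takeD sorted_wrt_take)
  then have "omega_step (concat pre @ s, r @ concat es)
      (concat pre @ rj @ sj @ s, concat (take i es) @ concat (drop i es))"
    using omega_step_P[OF lfact_pre_s lfact_E' r_append_take_es_less_s] \<open>s \<le> sj\<close> r_std(1)
    by simp
  then show ?thesis
    using om_eq r_std(1) by (simp flip: concat_append)
qed

end

end

locale psi_unsplittable = psi_state +
  fixes pre' :: "'a::linorder list list" and op :: "'a list"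
  assumes pre_eq: "pre = pre' @ [op]" and op_bound: "proper_suffixes_ge op om"
begin

lemma pre'_factors: "lyndon_factors pre'" and op_lyndon: "lyndon op"
  using factors_O pre_eq by (simp_all add: lyndon_factors_append lyndon_factors_Cons)

lemma lfact_pre': "lfact (concat pre') = pre'"
  using pre'_factors by simp

lemma om_less_op: "om < op" and op_less_pre': "\<forall>f\<in>set pre'. op < f"
  using O_strictly_decreasing pre_eq by (simp_all add: sorted_wrt_append)

lemma om_not_Nil: "om \<noteq> []"
  using om_lyndon lyndon_not_Nil by blast

lemma es_le_op: "e \<in> set es \<Longrightarrow> e \<le> op"
  using es_bound pre_eq by simp

lemma lfact_om_op_es:
  obtains i where "lfact (om @ op @ concat es) = (om @ op @ concat (take i es)) # drop i es"
  using lfact_lyndon_append[OF lyndon_append[OF om_lyndon op_lyndon om_less_op] factors_E]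
  by (metis append.assoc)

lemma om_op_take_es_less_pre': "g \<in> set pre' \<Longrightarrow> om @ op @ concat (take i es) < g"
proof -
  assume g: "g \<in> set pre'"
  then have "op < g" using op_less_pre' by blast
  then have "\<forall>e\<in>set (op # take i es). e \<le> g"
    using es_le_op by (fastforce dest: in_set_takeD intro: order.trans[OF _ less_imp_le])
  with g pre'_factors om_less_op \<open>op < g\<close> om_not_Nil show ?thesis
    using lyndon_prefix_append_concat_less[of g om "op # take i es"]
    by (auto simp: lyndon_factors_def intro: order.strict_trans)
qed

lemma psi_F_invariant: "factor_invariant (lfact (concat pre')) (lfact (om @ op @ concat es))"
proof -
  obtain i
    where lfact_E': "lfact (om @ op @ concat es) = (om @ op @ concat (take i es)) # drop i es"
    using lfact_om_op_es by blast
  have "factor_bound pre' e" if "e \<in> set (lfact (om @ op @ concat es))" for e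
  proof (rule factor_bound_lyndon, intro ballI conjI)
    fix g assume g: "g \<in> set pre'"
    with pre'_factors show "lyndon g" by (simp add: lyndon_factors_def)
    from that g show "e \<le> g"
      using om_op_take_es_less_pre' es_le_op op_less_pre' unfolding lfact_E'
      by (fastforce dest: in_set_dropD intro: le_less_trans less_imp_le)
  qed
  moreover have "even (length (om @ op @ concat (take i es)))"
    using even_concat_take_es odd_O pre_eq by simp
  moreover have "distinct pre'" "\<forall>g\<in>set pre'. odd (length g)"
    using invariant pre_eq by (simp_all add: factor_invariant_def)
  ultimately show ?thesis
    using es_bound unfolding lfact_pre' factor_invariant_def
    by (auto simp: lfact_E' dest: in_set_dropD)
qed

lemma psi_F_omega:
  "omega_step (concat pre', om @ op @ concat es) (concat pre @ om, concat es)"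
proof -
  obtain i
    where lfact_E': "lfact (om @ op @ concat es) = (om @ op @ concat (take i es)) # drop i es"
    using lfact_om_op_es by blast
  have "min_suffix (om @ [] @ op) op"
    using op_bound om_not_Nil op_lyndon by (intro min_suffix_append) (auto simp: suffixes_ge_def)
  moreover have "proper_suffixes_ge e (om @ op)" if "e \<in> set es" for e
    using that es_le_op proper_suffixes_ge_mono[OF _ op_bound]
    by (auto intro: proper_suffixes_ge_append suffixes_ge_lyndon[OF op_lyndon])
  moreover have "less_inf e (last_factor pre')" if "e \<in> set es" for e
    using that es_le_op op_less_pre' by (auto intro: last_factor_gt le_less_trans)
  ultimately have "isf (last_factor pre') (om @ op @ concat (take i es)) om (op # take i es)"
    using lyndon_factors_lfact[of "om @ op @ concat es"] factors_E es_bound odd_O pre_eq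
    unfolding lfact_E'
    by (intro isf_append_factors)
      (auto simp: lyndon_factors_def dest: in_set_takeD sorted_wrt_take)
  then have "omega_step (concat pre', om @ op @ concat es)
      (concat pre' @ op @ om, concat (take i es) @ concat (drop i es))"
    using omega_step_F[OF lfact_E', of "concat pre'", unfolded lfact_pre']
      last_factor_gt(2)[of pre'] last_factor_gt(3)[OF op_less_pre'] om_op_take_es_less_pre'
    by blast
  moreover have "concat (take i es) @ concat (drop i es) = concat es"
    by (simp flip: concat_append)
  ultimately show ?thesis
    using pre_eq by simp
qed

end

lemma proper_suffixes_ge_unsplittable:
  assumes "std_split l = (r, s)" and "\<not> (2 \<le> length l \<and> s < u)"
  shows "proper_suffixes_ge u l"
proof (cases "2 \<le> length l")
  case True
  with assms have "u \<le> s" by simp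
  from proper_suffixes_ge_mono[OF this std_split_min_suffix(4)[OF True assms(1)]] show ?thesis .
qed (auto simp: proper_suffixes_ge_def)

lemma psi_step_inverse:
  assumes inv: "factor_invariant (lfact Ow) (lfact Ew)" and len: "2 \<le> length Ow"
  shows "factor_invariant (lfact (fst (psi (Ow, Ew)))) (lfact (snd (psi (Ow, Ew)))) \<and>
    omega_step (psi (Ow, Ew)) (Ow, Ew)"
proof -
  have "lfact Ow \<noteq> []"
  proof
    assume "lfact Ow = []"
    then have "Ow = []" by (metis concat_lfact concat.simps(1))
    with len show False by simp
  qed
  then obtain pre om where fs: "lfact Ow = pre @ [om]" by (cases "lfact Ow" rule: rev_cases) auto
  interpret psi_state pre om "lfact Ew"
    using lyndon_factors_lfact[of Ow] lyndon_factors_lfact[of Ew] inv fs by unfold_locales auto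
  have Ow: "Ow = concat pre @ om" using concat_lfact[of Ow] fs by simp
  obtain r s where split: "std_split om = (r, s)" by fastforce
  have "pre = [] \<longrightarrow> 2 \<le> length om" using len Ow by auto
  note psi = psi_eq[OF fs split this, of Ew]
  show ?thesis
  proof (cases "2 \<le> length om \<and> less_inf s (last_factor pre)")
    case True
    then interpret psi_splittable pre om "lfact Ew" r s
      using split s_less_pre_iff by unfold_locales auto
    show ?thesis
      using True psi Ow psi_S_invariant psi_S_omega psi_P_invariant psi_P_omega by auto
  next
    case False
    then have "pre \<noteq> []" using \<open>pre = [] \<longrightarrow> 2 \<le> length om\<close> by (auto simp: last_factor_def)
    then obtain pre' op where pre: "pre = pre' @ [op]" by (cases pre rule: rev_cases) auto
    with False split have "proper_suffixes_ge op om"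
      by (intro proper_suffixes_ge_unsplittable) (auto simp: last_factor_def)
    with pre interpret psi_unsplittable pre om "lfact Ew" pre' op
      by unfold_locales
    show ?thesis
      using False psi Ow pre psi_F_invariant psi_F_omega by auto
  qed
qed

lemma psi_run_factor_invariant:
  assumes "psi_run w p" and "w \<in> Wo n"
  shows "factor_invariant (lfact (fst p)) (lfact (snd p))"
  using assms
proof (induct p rule: psi_run.induct)
  case start
  then show ?case by (simp add: Wo_def factor_invariant_def)
next
  case (step Ow Ew)
  then show ?case using psi_step_inverse[of Ow Ew] by simp
qed

theorem lemma4p22:
  fixes w :: "'a::{linorder, finite} list" and n :: nat and Ow Ew :: "'a list"
  assumes "w \<in> Wo n"
    and "psi_run w (Ow, Ew)"
    and "2 \<le> length Ow"
  shows "omega_step (psi (Ow, Ew)) (Ow, Ew)"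
  using psi_step_inverse psi_run_factor_invariant assms by fastforce

end
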